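(* Let $P$ be the feasible set of the rational mixed-integer program $\min\{c^Tx : Ax\le b,\ \ell\le x\le u,\ x_j\in\mathbb{Z} \text{ for all } j\in I\}$, where $A\in\mathbb{Q}^{m\times n}$, $c\in\mathbb{Q}^n$, $b\in\mathbb{Q}^m$, $\ell,u\in(\mathbb{Q}\cup\{\pm\infty\})^n$, $I\subseteq\{1,\dots,n\}$. Let $\alpha^Tx\le\beta$ be an inequality valid for $P$, let $s\ge 0$ be a scaling factor, and let $U,L\subseteq\{1,\dots,n\}$ be disjoint index sets such that $u_i<\infty$ for all $i\in U$, $\ell_i>-\infty$ for all $i\in L$, and $\alpha_i=0$ for all $i\notin U\cup L$. Then the scaled inequality $$\sum_{i\in U}\overline{s\alpha_i}\,x_i+\sum_{i\in L}\underline{s\alpha_i}\,x_i\;\le\;\overline{s\beta+\sum_{i\in U,\,u_i>0}(\overline{s\alpha_i}-\underline{s\alpha_i})\,u_i+\sum_{i\in L,\,\ell_i<0}(\underline{s\alpha_i}-\overline{s\alpha_i})\,\ell_i}$$ is valid for $P$ and $\mathbb{F}$-representable.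
   Context: An inequality is valid for $P$ if every point of $P$ satisfies it. $\mathbb{F}\subseteq\mathbb{Q}$ denotes a fixed set of floating-point numbers (e.g. IEEE double-precision numbers). For $x\in\mathbb{Q}$, $\overline{x}:=\min\{y\in\mathbb{F}: y>x\}$ and $\underline{x}:=\max\{y\in\mathbb{F}: y<x\}$ (assumed to exist for all numbers occurring). An inequality $a^Tx\le\beta$ is $\mathbb{F}$-representable if $a\in\mathbb{F}^n$ and $\beta\in\mathbb{F}$. *)

theory Defs
  imports Complex_Main
begin

text \<open>Vectors in R^n / Q^n are modelled as functions on nat, with indices 0..n-1
  (i.e. {..<n} plays the role of {1,...,n}).  Infinite bounds are modelled by None:
  l i = None means l_i = -infinity, u i = None means u_i = +infinity.\<close>

definition mip_feasible ::
  "nat \<Rightarrow> nat \<Rightarrow> (nat \<Rightarrow> nat \<Rightarrow> rat) \<Rightarrow> (nat \<Rightarrow> rat) \<Rightarrow>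
   (nat \<Rightarrow> rat option) \<Rightarrow> (nat \<Rightarrow> rat option) \<Rightarrow> nat set \<Rightarrow> (nat \<Rightarrow> real) set" where
  "mip_feasible n m A b l u I =
     {x. (\<forall>j<m. (\<Sum>i<n. of_rat (A j i) * x i) \<le> of_rat (b j))
       \<and> (\<forall>i<n. case l i of None \<Rightarrow> True | Some li \<Rightarrow> of_rat li \<le> x i)
       \<and> (\<forall>i<n. case u i of None \<Rightarrow> True | Some ui \<Rightarrow> x i \<le> of_rat ui)
       \<and> (\<forall>j\<in>I. x j \<in> \<int>)
       \<and> (\<forall>i\<ge>n. x i = 0)}"

definition valid_ineq :: "nat \<Rightarrow> (nat \<Rightarrow> rat) \<Rightarrow> rat \<Rightarrow> (nat \<Rightarrow> real) set \<Rightarrow> bool" where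
  "valid_ineq n a \<beta> P \<longleftrightarrow> (\<forall>x\<in>P. (\<Sum>i<n. of_rat (a i) * x i) \<le> of_rat \<beta>)"

definition F_representable :: "rat set \<Rightarrow> nat \<Rightarrow> (nat \<Rightarrow> rat) \<Rightarrow> rat \<Rightarrow> bool" where
  "F_representable F n a \<beta> \<longleftrightarrow> (\<forall>i<n. a i \<in> F) \<and> \<beta> \<in> F"

definition round_up :: "rat set \<Rightarrow> rat \<Rightarrow> rat" where
  "round_up F x = (LEAST y. y \<in> F \<and> x < y)"

definition round_down :: "rat set \<Rightarrow> rat \<Rightarrow> rat" where
  "round_down F x = (GREATEST y. y \<in> F \<and> y < x)"

definition has_round_up :: "rat set \<Rightarrow> rat \<Rightarrow> bool" where
  "has_round_up F x \<longleftrightarrow> (\<exists>y\<in>F. x < y \<and> (\<forall>z\<in>F. x < z \<longrightarrow> y \<le> z))"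

definition has_round_down :: "rat set \<Rightarrow> rat \<Rightarrow> bool" where
  "has_round_down F x \<longleftrightarrow> (\<exists>y\<in>F. y < x \<and> (\<forall>z\<in>F. z < x \<longrightarrow> z \<le> y))"

end

theory Submission
  imports Defs
begin

text \<open>Rounding a coefficient \<open>s \<alpha>\<^sub>i\<close> up to \<open>a'\<close> (for \<open>i \<in> U\<close>) changes the left-hand
  side by \<open>(a' - s \<alpha>\<^sub>i) x\<^sub>i \<le> (a' - s \<alpha>\<^sub>i) u\<^sub>i\<close>; this error is nonpositive when
  \<open>u\<^sub>i \<le> 0\<close> and is bounded by \<open>(a' - d) u\<^sub>i\<close> with \<open>d\<close> the downward rounding otherwise.
  Symmetrically for \<open>i \<in> L\<close> with the lower bound \<open>\<ell>\<^sub>i\<close>.  Summing these errors over all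
  coordinates and adding them to the scaled right-hand side \<open>s \<beta>\<close> gives a valid right-hand
  side, which stays valid after rounding it up.\<close>

lemma round_up_spec:
  assumes "has_round_up F x"
  shows "round_up F x \<in> F" and "x < round_up F x"
proof -
  from assms obtain y where y: "y \<in> F" "x < y" "\<forall>z\<in>F. x < z \<longrightarrow> y \<le> z"
    unfolding has_round_up_def by blast
  have "round_up F x = y"
    unfolding round_up_def by (rule Least_equality) (use y in auto)
  with y show "round_up F x \<in> F" and "x < round_up F x" by simp_all
qed

lemma round_down_spec:
  assumes "has_round_down F x"
  shows "round_down F x \<in> F" and "round_down F x < x"
proof -
  from assms obtain y where y: "y \<in> F" "y < x" "\<forall>z\<in>F. z < x \<longrightarrow> z \<le> y"
    unfolding has_round_down_def by blast
  have "round_down F x = y"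
    unfolding round_down_def by (rule Greatest_equality) (use y in auto)
  with y show "round_down F x \<in> F" and "round_down F x < x" by simp_all
qed

lemma rounded_up_coeff_bound:
  fixes a a' d x ub :: "'a::linordered_idom"
  assumes "d \<le> a" "a \<le> a'" "x \<le> ub"
  shows "a' * x \<le> a * x + (if 0 < ub then (a' - d) * ub else 0)"
proof -
  have "(a' - a) * x \<le> (a' - a) * ub"
    using assms by (intro mult_left_mono) auto
  also have "\<dots> \<le> (if 0 < ub then (a' - d) * ub else 0)"
    using assms by (auto intro: mult_right_mono mult_nonneg_nonpos)
  finally show ?thesis by (simp add: algebra_simps)
qed

lemma rounded_down_coeff_bound:
  fixes a d u x lb :: "'a::linordered_idom"
  assumes "d \<le> a" "a \<le> u" "lb \<le> x"
  shows "d * x \<le> a * x + (if lb < 0 then (d - u) * lb else 0)"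
proof -
  have "(d - a) * x \<le> (d - a) * lb"
    using assms by (intro mult_left_mono_neg) auto
  also have "\<dots> \<le> (if lb < 0 then (d - u) * lb else 0)"
    using assms by (auto intro: mult_right_mono_neg mult_nonpos_nonneg)
  finally show ?thesis by (simp add: algebra_simps)
qed

lemma valid_ineq_scale:
  assumes "valid_ineq n \<alpha> \<beta> P" "0 \<le> s"
  shows "valid_ineq n (\<lambda>i. s * \<alpha> i) (s * \<beta>) P"
  unfolding valid_ineq_def
proof
  fix x assume "x \<in> P"
  then have "(\<Sum>i<n. of_rat (\<alpha> i) * x i) \<le> of_rat \<beta>"
    using assms(1) unfolding valid_ineq_def by blast
  then have "of_rat s * (\<Sum>i<n. of_rat (\<alpha> i) * x i) \<le> of_rat s * (of_rat \<beta> :: real)"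
    using assms(2) by (intro mult_left_mono) auto
  then show "(\<Sum>i<n. of_rat (s * \<alpha> i) * x i) \<le> of_rat (s * \<beta>)"
    by (simp add: of_rat_mult sum_distrib_left mult.assoc)
qed

lemma valid_ineq_relax:
  assumes valid: "valid_ineq n a \<beta> P"
    and coeff: "\<And>x i. x \<in> P \<Longrightarrow> i < n \<Longrightarrow> of_rat (c i) * x i \<le> of_rat (a i) * x i + err i"
    and rhs: "of_rat \<beta> + (\<Sum>i<n. err i) \<le> of_rat \<beta>'"
  shows "valid_ineq n c \<beta>' P"
  unfolding valid_ineq_def
proof
  fix x assume x: "x \<in> P"
  have "(\<Sum>i<n. of_rat (c i) * x i) \<le> (\<Sum>i<n. of_rat (a i) * x i + err i)"
    using coeff[OF x] by (intro sum_mono) auto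
  also have "\<dots> \<le> of_rat \<beta> + (\<Sum>i<n. err i)"
    using valid x unfolding valid_ineq_def by (simp add: sum.distrib)
  finally show "(\<Sum>i<n. of_rat (c i) * x i) \<le> of_rat \<beta>'"
    using rhs by simp
qed

lemma mip_feasible_upper_bound:
  "x \<in> mip_feasible n m A b l u I \<Longrightarrow> i < n \<Longrightarrow> u i = Some ui \<Longrightarrow> x i \<le> of_rat ui"
  unfolding mip_feasible_def by force

lemma mip_feasible_lower_bound:
  "x \<in> mip_feasible n m A b l u I \<Longrightarrow> i < n \<Longrightarrow> l i = Some li \<Longrightarrow> of_rat li \<le> x i"
  unfolding mip_feasible_def by force

definition rounding_slack ::
  "nat set \<Rightarrow> nat set \<Rightarrow> (nat \<Rightarrow> rat option) \<Rightarrow> (nat \<Rightarrow> rat option) \<Rightarrow>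
   (nat \<Rightarrow> rat) \<Rightarrow> (nat \<Rightarrow> rat) \<Rightarrow> nat \<Rightarrow> rat" where
  "rounding_slack U L l u up dn i =
     (if i \<in> U \<and> 0 < the (u i) then (up i - dn i) * the (u i) else 0)
     + (if i \<in> L \<and> the (l i) < 0 then (dn i - up i) * the (l i) else 0)"

lemma sum_rounding_slack:
  assumes "U \<subseteq> {..<n}" "L \<subseteq> {..<n}"
  shows "(\<Sum>i<n. rounding_slack U L l u up dn i)
    = (\<Sum>i\<in>{i\<in>U. 0 < the (u i)}. (up i - dn i) * the (u i))
      + (\<Sum>i\<in>{i\<in>L. the (l i) < 0}. (dn i - up i) * the (l i))"
proof -
  have "{i\<in>U. 0 < the (u i)} = {i\<in>{..<n}. i \<in> U \<and> 0 < the (u i)}"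
    and "{i\<in>L. the (l i) < 0} = {i\<in>{..<n}. i \<in> L \<and> the (l i) < 0}"
    using assms by auto
  then show ?thesis
    unfolding rounding_slack_def sum.distrib
    by (simp only: sum.inter_filter[OF finite_lessThan])
qed

lemma rounded_coeff_le_slack:
  assumes x: "x \<in> mip_feasible n m A b l u I" and i: "i < n"
    and UL: "U \<inter> L = {}" and ufin: "\<forall>i\<in>U. u i \<noteq> None" and lfin: "\<forall>i\<in>L. l i \<noteq> None"
    and zero: "i \<notin> U \<union> L \<Longrightarrow> a i = 0"
    and rounded: "i \<in> U \<union> L \<Longrightarrow> dn i \<le> a i \<and> a i \<le> up i"
  shows "of_rat (if i \<in> U then up i else if i \<in> L then dn i else 0) * x i
    \<le> of_rat (a i) * x i + of_rat (rounding_slack U L l u up dn i)"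
proof -
  consider "i \<in> U" "i \<notin> L" | "i \<in> L" "i \<notin> U" | "i \<notin> U \<union> L" using UL by blast
  then show ?thesis
  proof cases
    case 1
    with ufin obtain ui where ui: "u i = Some ui" by auto
    from 1 rounded have "of_rat (dn i) \<le> (of_rat (a i) :: real)" "of_rat (a i) \<le> (of_rat (up i) :: real)"
      by (simp_all add: of_rat_less_eq)
    from rounded_up_coeff_bound[OF this mip_feasible_upper_bound[OF x i ui]] 1 ui
    show ?thesis by (simp add: rounding_slack_def of_rat_mult of_rat_diff split: if_splits)
  next
    case 2
    with lfin obtain li where li: "l i = Some li" by auto
    from 2 rounded have "of_rat (dn i) \<le> (of_rat (a i) :: real)" "of_rat (a i) \<le> (of_rat (up i) :: real)"
      by (simp_all add: of_rat_less_eq)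
    from rounded_down_coeff_bound[OF this mip_feasible_lower_bound[OF x i li]] 2 li
    show ?thesis by (simp add: rounding_slack_def of_rat_mult of_rat_diff split: if_splits)
  next
    case 3
    with zero show ?thesis by (simp add: rounding_slack_def)
  qed
qed

theorem lemma2:
  fixes n m :: nat
    and A :: "nat \<Rightarrow> nat \<Rightarrow> rat" and b :: "nat \<Rightarrow> rat"
    and l u :: "nat \<Rightarrow> rat option" and I :: "nat set"
    and \<alpha> :: "nat \<Rightarrow> rat" and \<beta> s :: rat
    and U L :: "nat set" and F :: "rat set"
  assumes I: "I \<subseteq> {..<n}"
    and F0: "0 \<in> F"
    and valid: "valid_ineq n \<alpha> \<beta> (mip_feasible n m A b l u I)"
    and s: "s \<ge> 0"
    and UL: "U \<subseteq> {..<n}" "L \<subseteq> {..<n}" "U \<inter> L = {}"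
    and ufin: "\<forall>i\<in>U. u i \<noteq> None"
    and lfin: "\<forall>i\<in>L. l i \<noteq> None"
    and zero: "\<forall>i<n. i \<notin> U \<union> L \<longrightarrow> \<alpha> i = 0"
    and ex_coef: "\<forall>i\<in>U \<union> L. has_round_up F (s * \<alpha> i) \<and> has_round_down F (s * \<alpha> i)"
    and ex_rhs: "has_round_up F
        (s * \<beta>
         + (\<Sum>i\<in>{i\<in>U. the (u i) > 0}.
              (round_up F (s * \<alpha> i) - round_down F (s * \<alpha> i)) * the (u i))
         + (\<Sum>i\<in>{i\<in>L. the (l i) < 0}.
              (round_down F (s * \<alpha> i) - round_up F (s * \<alpha> i)) * the (l i)))"
  shows "valid_ineq n
           (\<lambda>i. if i \<in> U then round_up F (s * \<alpha> i)
                 else if i \<in> L then round_down F (s * \<alpha> i) else 0)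
           (round_up F
              (s * \<beta>
               + (\<Sum>i\<in>{i\<in>U. the (u i) > 0}.
                    (round_up F (s * \<alpha> i) - round_down F (s * \<alpha> i)) * the (u i))
               + (\<Sum>i\<in>{i\<in>L. the (l i) < 0}.
                    (round_down F (s * \<alpha> i) - round_up F (s * \<alpha> i)) * the (l i))))
           (mip_feasible n m A b l u I)
       \<and> F_representable F n
           (\<lambda>i. if i \<in> U then round_up F (s * \<alpha> i)
                 else if i \<in> L then round_down F (s * \<alpha> i) else 0)
           (round_up F
              (s * \<beta>
               + (\<Sum>i\<in>{i\<in>U. the (u i) > 0}.
                    (round_up F (s * \<alpha> i) - round_down F (s * \<alpha> i)) * the (u i))
               + (\<Sum>i\<in>{i\<in>L. the (l i) < 0}.
                    (round_down F (s * \<alpha> i) - round_up F (s * \<alpha> i)) * the (l i))))"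
proof -
  define up where "up i = round_up F (s * \<alpha> i)" for i
  define dn where "dn i = round_down F (s * \<alpha> i)" for i
  define c where "c i = (if i \<in> U then up i else if i \<in> L then dn i else 0)" for i
  define R where "R = s * \<beta>
    + (\<Sum>i\<in>{i\<in>U. the (u i) > 0}. (up i - dn i) * the (u i))
    + (\<Sum>i\<in>{i\<in>L. the (l i) < 0}. (dn i - up i) * the (l i))"
  have up: "up i \<in> F" "s * \<alpha> i < up i" and dn: "dn i \<in> F" "dn i < s * \<alpha> i"
    if "i \<in> U \<union> L" for i
    using ex_coef that round_up_spec round_down_spec unfolding up_def dn_def by blast+
  have R: "round_up F R \<in> F" "R < round_up F R"
    using round_up_spec[OF ex_rhs] unfolding R_def up_def dn_def by simp_all
  have "of_rat (s * \<beta>) + (\<Sum>i<n. of_rat (rounding_slack U L l u up dn i))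
      = (of_rat R :: real)"
    unfolding R_def sum_rounding_slack[OF UL(1,2)] of_rat_sum[symmetric] of_rat_add by simp
  also have "\<dots> \<le> of_rat (round_up F R)"
    using R(2) by (simp add: of_rat_less_eq)
  finally have rhs: "of_rat (s * \<beta>) + (\<Sum>i<n. of_rat (rounding_slack U L l u up dn i))
      \<le> (of_rat (round_up F R) :: real)" .
  have coeff: "of_rat (c i) * x i
      \<le> of_rat (s * \<alpha> i) * x i + of_rat (rounding_slack U L l u up dn i)"
    if "x \<in> mip_feasible n m A b l u I" "i < n" for x i
    unfolding c_def using that UL(3) ufin lfin zero up(2) dn(2)
    by (intro rounded_coeff_le_slack) (auto intro: less_imp_le)
  from valid_ineq_scale[OF valid s] coeff rhs
  have "valid_ineq n c (round_up F R) (mip_feasible n m A b l u I)"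
    by (rule valid_ineq_relax)
  moreover have "F_representable F n c (round_up F R)"
    unfolding F_representable_def c_def using R(1) up(1) dn(1) F0 by auto
  ultimately show ?thesis unfolding c_def R_def up_def dn_def by simp
qed

end
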